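(* Let $(A,d)$ be a metric space and $\rho:[0,1]\to[0,1]$ an ndrc grey level map with $\rho(0)=0$. Then for all $u,v\in\mathcal F_A^*$, $$\sup_{\alpha\in[0,1]}h([\rho(u)]^\alpha,[\rho(v)]^\alpha)\le d_\infty(u,v),$$ with the convention $h(\emptyset,\emptyset)=0$ (for $\alpha>\rho(1)$ both $\alpha$-cuts are empty); i.e. $d_\infty(\rho(u),\rho(v))\le d_\infty(u,v)$.
   Context: A fuzzy subset of $A$ is a function $u:A\to[0,1]$. For $\alpha\in(0,1]$, $[u]^\alpha=\{x:u(x)\ge\alpha\}$, $[u]^0=\overline{\{x:u(x)>0\}}$. $\mathcal F_A^*$ is the set of fuzzy subsets that are normal, usc and compactly supported. $h$ is the Hausdorff metric on nonempty compact sets and $d_\infty(u,v)=\sup_{\alpha\in[0,1]}h([u]^\alpha,[v]^\alpha)$. A grey level map is a non-identically-zero $\rho:[0,1]\to[0,1]$; ndrc means nondecreasing and right continuous; $\rho(u)=\rho\circ u$. *)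

theory Defs
  imports "HOL-Analysis.Analysis"
begin

definition hausdorff_dist :: "'a::metric_space set \<Rightarrow> 'a set \<Rightarrow> real" where
  "hausdorff_dist S T =
     (if S = {} \<and> T = {} then 0
      else max (SUP x\<in>S. infdist x T) (SUP y\<in>T. infdist y S))"

definition cut :: "('a::topological_space \<Rightarrow> real) \<Rightarrow> real \<Rightarrow> 'a set" where
  "cut u \<alpha> = (if \<alpha> = 0 then closure {x. u x > 0} else {x. u x \<ge> \<alpha>})"

definition fuzzy_set :: "('a \<Rightarrow> real) \<Rightarrow> bool" where
  "fuzzy_set u \<longleftrightarrow> (\<forall>x. 0 \<le> u x \<and> u x \<le> 1)"

text \<open>The class F*_A: normal, upper semicontinuous, compactly supported fuzzy sets.\<close>
definition fuzzy_star :: "('a::metric_space \<Rightarrow> real) set" where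
  "fuzzy_star = {u. fuzzy_set u
      \<and> (\<exists>x. u x = 1)
      \<and> (\<forall>a. closed {x. u x \<ge> a})
      \<and> compact (closure {x. u x > 0})}"

definition d_infty :: "('a::metric_space \<Rightarrow> real) \<Rightarrow> ('a \<Rightarrow> real) \<Rightarrow> real" where
  "d_infty u v = (SUP \<alpha>\<in>{0..1}. hausdorff_dist (cut u \<alpha>) (cut v \<alpha>))"

definition grey_level_map :: "(real \<Rightarrow> real) \<Rightarrow> bool" where
  "grey_level_map \<rho> \<longleftrightarrow> \<rho> ` {0..1} \<subseteq> {0..1} \<and> (\<exists>t\<in>{0..1}. \<rho> t \<noteq> 0)"

definition ndrc :: "(real \<Rightarrow> real) \<Rightarrow> bool" where
  "ndrc \<rho> \<longleftrightarrow> mono_on {0..1} \<rho> \<and> (\<forall>t\<in>{0..1}. continuous (at t within {t..1}) \<rho>)"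

end

theory Submission
  imports Defs
begin

text \<open>A point x of the rho(u)-cut at level alpha > 0 has rho(u x) >= alpha > 0, so
  gamma = u x > 0 since rho 0 = 0, and monotonicity of rho puts the gamma-cut of v inside the
  rho(v)-cut at level alpha. So the distance from x to the latter is at most its distance to the
  gamma-cut of v, which is at most d_infty u v. The 0-cut is the closure of such points, and
  the distance to a fixed set is continuous.\<close>

lemma hausdorff_dist_commute: "hausdorff_dist S T = hausdorff_dist T S"
  unfolding hausdorff_dist_def by (simp add: max.commute conj_commute)

lemma infdist_le_diameter:
  fixes S T :: "'a::metric_space set"
  assumes "x \<in> S" "t \<in> T" "bounded (S \<union> T)"
  shows "infdist x T \<le> diameter (S \<union> T)"
proof -
  have "infdist x T \<le> dist x t" using \<open>t \<in> T\<close> by (rule infdist_le)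
  also have "\<dots> \<le> diameter (S \<union> T)" using assms by (intro diameter_bounded_bound) auto
  finally show ?thesis .
qed

lemma hausdorff_dist_le_diameter:
  fixes S T :: "'a::metric_space set"
  assumes "S \<noteq> {}" "T \<noteq> {}" "bounded (S \<union> T)"
  shows "hausdorff_dist S T \<le> diameter (S \<union> T)"
proof -
  have "(SUP x\<in>S. infdist x T) \<le> diameter (S \<union> T)"
  proof (rule cSUP_least)
    fix x assume "x \<in> S"
    obtain t where "t \<in> T" using assms(2) by blast
    then show "infdist x T \<le> diameter (S \<union> T)"
      using \<open>x \<in> S\<close> assms(3) by (intro infdist_le_diameter)
  qed (use assms(1) in simp)
  moreover have "(SUP y\<in>T. infdist y S) \<le> diameter (S \<union> T)"
  proof (rule cSUP_least)
    fix y assume "y \<in> T"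
    obtain s where "s \<in> S" using assms(1) by blast
    then have "infdist y S \<le> diameter (T \<union> S)"
      using \<open>y \<in> T\<close> assms(3) by (intro infdist_le_diameter) (auto simp: Un_commute)
    then show "infdist y S \<le> diameter (S \<union> T)" by (simp add: Un_commute)
  qed (use assms(2) in simp)
  ultimately show ?thesis using assms unfolding hausdorff_dist_def by auto
qed

lemma infdist_le_hausdorff_dist:
  fixes S T :: "'a::metric_space set"
  assumes "x \<in> S" "T \<noteq> {}" "bounded (S \<union> T)"
  shows "infdist x T \<le> hausdorff_dist S T"
proof -
  obtain t where t: "t \<in> T" using assms(2) by blast
  have "bdd_above ((\<lambda>x. infdist x T) ` S)"
    using infdist_le_diameter[OF _ t assms(3)] by (rule bdd_aboveI2)
  then have "infdist x T \<le> (SUP x\<in>S. infdist x T)"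
    by (rule cSUP_upper[OF assms(1)])
  then show ?thesis using assms unfolding hausdorff_dist_def by auto
qed

lemma hausdorff_dist_le:
  fixes S T :: "'a::metric_space set"
  assumes "\<forall>x\<in>S. infdist x T \<le> D" "\<forall>y\<in>T. infdist y S \<le> D" "0 \<le> D"
    and "S = {} \<longleftrightarrow> T = {}"
  shows "hausdorff_dist S T \<le> D"
proof (cases "S = {}")
  case False
  then have "(SUP x\<in>S. infdist x T) \<le> D" "(SUP y\<in>T. infdist y S) \<le> D"
    using assms(1,2,4) by (simp_all add: cSUP_least)
  then show ?thesis using False unfolding hausdorff_dist_def by auto
next
  case True
  then show ?thesis using assms(3,4) unfolding hausdorff_dist_def by simp
qed

lemma cut_pos: "\<alpha> > 0 \<Longrightarrow> cut u \<alpha> = {x. u x \<ge> \<alpha>}"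
  unfolding cut_def by auto

lemma mem_cut_of_pos:
  assumes "0 < u x" "\<alpha> \<le> u x"
  shows "x \<in> cut u \<alpha>"
proof (cases "\<alpha> = 0")
  case True
  then show ?thesis using assms(1) closure_subset[of "{x. u x > 0}"] unfolding cut_def by auto
qed (use assms(2) in \<open>simp add: cut_def\<close>)

lemma cut_subset_support_closure:
  assumes "0 \<le> \<alpha>"
  shows "cut u \<alpha> \<subseteq> closure {x. u x > 0}"
proof (cases "\<alpha> = 0")
  case False
  then have "cut u \<alpha> \<subseteq> {x. u x > 0}" using assms unfolding cut_def by auto
  then show ?thesis using closure_subset by blast
qed (simp add: cut_def)

lemma cut_nonempty: "u y = 1 \<Longrightarrow> \<alpha> \<le> 1 \<Longrightarrow> cut u \<alpha> \<noteq> {}"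
  using mem_cut_of_pos[of u y \<alpha>] by auto

lemma cut_subset_cut_comp:
  assumes "mono_on {0..1} \<rho>" "fuzzy_set v" "\<gamma> \<in> {0<..1}" "0 < \<rho> \<gamma>" "\<alpha> \<le> \<rho> \<gamma>"
  shows "cut v \<gamma> \<subseteq> cut (\<rho> \<circ> v) \<alpha>"
proof
  fix y assume "y \<in> cut v \<gamma>"
  then have "\<gamma> \<le> v y" "v y \<le> 1"
    using assms(2,3) cut_pos[of \<gamma> v] unfolding fuzzy_set_def by auto
  then have "\<rho> \<gamma> \<le> \<rho> (v y)" using assms(3) by (intro mono_onD[OF assms(1)]) auto
  then show "y \<in> cut (\<rho> \<circ> v) \<alpha>" using assms(4,5) by (intro mem_cut_of_pos) auto
qed

context
  fixes \<rho> :: "real \<Rightarrow> real" and u v :: "'a::metric_space \<Rightarrow> real" and D :: real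
  assumes mono: "mono_on {0..1} \<rho>" and \<rho>0: "\<rho> 0 = 0"
    and fuzzy: "fuzzy_set u" "fuzzy_set v" and normal: "\<exists>y. v y = 1"
    and cut_dist: "\<And>\<gamma> x. \<gamma> \<in> {0<..1} \<Longrightarrow> x \<in> cut u \<gamma> \<Longrightarrow> infdist x (cut v \<gamma>) \<le> D"
begin

lemma infdist_cut_comp_le_of_pos:
  assumes "0 < \<rho> (u z)" "\<alpha> \<le> \<rho> (u z)"
  shows "cut (\<rho> \<circ> v) \<alpha> \<noteq> {} \<and> infdist z (cut (\<rho> \<circ> v) \<alpha>) \<le> D"
proof -
  define \<gamma> where "\<gamma> = u z"
  have "\<gamma> \<noteq> 0" using assms(1) \<rho>0 \<gamma>_def by auto
  moreover have "0 \<le> \<gamma>" "\<gamma> \<le> 1" using fuzzy(1) unfolding fuzzy_set_def \<gamma>_def by auto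
  ultimately have \<gamma>: "\<gamma> \<in> {0<..1}" by auto
  have sub: "cut v \<gamma> \<subseteq> cut (\<rho> \<circ> v) \<alpha>"
    using assms \<gamma> by (intro cut_subset_cut_comp[OF mono fuzzy(2)]) (auto simp: \<gamma>_def)
  have ne: "cut v \<gamma> \<noteq> {}" using normal \<gamma> cut_nonempty by fastforce
  have "infdist z (cut (\<rho> \<circ> v) \<alpha>) \<le> infdist z (cut v \<gamma>)" using sub ne by (rule infdist_mono)
  also have "\<dots> \<le> D" using \<gamma> by (intro cut_dist) (auto intro: mem_cut_of_pos simp: \<gamma>_def)
  finally show ?thesis using sub ne by auto
qed

lemma infdist_cut_comp_le:
  assumes \<alpha>: "\<alpha> \<in> {0..1}" and x: "x \<in> cut (\<rho> \<circ> u) \<alpha>"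
  shows "cut (\<rho> \<circ> v) \<alpha> \<noteq> {} \<and> infdist x (cut (\<rho> \<circ> v) \<alpha>) \<le> D"
proof (cases "\<alpha> = 0")
  case False
  then have "\<alpha> \<le> \<rho> (u x)" "0 < \<alpha>" using \<alpha> x cut_pos[of \<alpha> "\<rho> \<circ> u"] by auto
  then show ?thesis by (intro infdist_cut_comp_le_of_pos) auto
next
  case True
  define U where "U = {z. \<rho> (u z) > 0}"
  have xU: "x \<in> closure U" using x True unfolding U_def cut_def by auto
  then obtain z where "z \<in> U" using closure_empty by fastforce
  then have ne: "cut (\<rho> \<circ> v) \<alpha> \<noteq> {}"
    using infdist_cut_comp_le_of_pos True unfolding U_def by auto
  have "U \<subseteq> {z. infdist z (cut (\<rho> \<circ> v) \<alpha>) \<le> D}"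
    using infdist_cut_comp_le_of_pos True unfolding U_def by auto
  then have "closure U \<subseteq> {z. infdist z (cut (\<rho> \<circ> v) \<alpha>) \<le> D}"
    by (rule closure_minimal) (intro closed_Collect_le continuous_intros)
  then show ?thesis using xU ne by auto
qed

end

lemma d_infty_commute: "d_infty u v = d_infty v u"
  unfolding d_infty_def by (simp add: hausdorff_dist_commute)

lemma infdist_cut_le_d_infty:
  assumes u: "u \<in> fuzzy_star" and v: "v \<in> fuzzy_star"
    and \<alpha>: "\<alpha> \<in> {0..1}" and x: "x \<in> cut u \<alpha>"
  shows "infdist x (cut v \<alpha>) \<le> d_infty u v"
proof -
  define K where "K = closure {x. u x > 0} \<union> closure {x. v x > 0}"
  have "bounded K"
    using u v unfolding K_def fuzzy_star_def by (auto intro: compact_imp_bounded)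
  then have bounded: "bounded (cut u \<beta> \<union> cut v \<beta>)" and sub: "cut u \<beta> \<union> cut v \<beta> \<subseteq> K"
    if "\<beta> \<in> {0..1}" for \<beta>
    using that cut_subset_support_closure[of \<beta>] unfolding K_def by (auto intro: bounded_subset)
  have ne: "cut w \<beta> \<noteq> {}" if "w \<in> fuzzy_star" "\<beta> \<in> {0..1}" for w :: "'a \<Rightarrow> real" and \<beta>
    using that cut_nonempty unfolding fuzzy_star_def by fastforce
  have "hausdorff_dist (cut u \<beta>) (cut v \<beta>) \<le> diameter K" if "\<beta> \<in> {0..1}" for \<beta>
    using hausdorff_dist_le_diameter[OF ne[OF u that] ne[OF v that] bounded[OF that]]
      diameter_subset[OF sub[OF that] \<open>bounded K\<close>] by linarith
  then have "bdd_above ((\<lambda>\<beta>. hausdorff_dist (cut u \<beta>) (cut v \<beta>)) ` {0..1})"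
    by (intro bdd_aboveI2)
  then have "hausdorff_dist (cut u \<alpha>) (cut v \<alpha>) \<le> d_infty u v"
    unfolding d_infty_def by (rule cSUP_upper[OF \<alpha>])
  moreover have "infdist x (cut v \<alpha>) \<le> hausdorff_dist (cut u \<alpha>) (cut v \<alpha>)"
    using x ne[OF v \<alpha>] bounded[OF \<alpha>] by (rule infdist_le_hausdorff_dist)
  ultimately show ?thesis by linarith
qed

lemma d_infty_nonneg:
  assumes "u \<in> fuzzy_star" "v \<in> fuzzy_star"
  shows "0 \<le> d_infty u v"
proof -
  obtain x where "u x = 1" using assms(1) unfolding fuzzy_star_def by blast
  then have "x \<in> cut u 1" by (intro mem_cut_of_pos) auto
  then have "infdist x (cut v 1) \<le> d_infty u v" by (intro infdist_cut_le_d_infty[OF assms]) auto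
  then show ?thesis using infdist_nonneg[of x "cut v 1"] by linarith
qed

theorem mainTheorem10:
  fixes \<rho> :: "real \<Rightarrow> real" and u v :: "'a::metric_space \<Rightarrow> real"
  assumes "grey_level_map \<rho>" and "ndrc \<rho>" and "\<rho> 0 = 0"
    and "u \<in> fuzzy_star" and "v \<in> fuzzy_star"
  shows "(SUP \<alpha>\<in>{0..1}. hausdorff_dist (cut (\<rho> \<circ> u) \<alpha>) (cut (\<rho> \<circ> v) \<alpha>)) \<le> d_infty u v"
proof (rule cSUP_least)
  fix \<alpha> :: real assume \<alpha>: "\<alpha> \<in> {0..1}"
  have mono: "mono_on {0..1} \<rho>" using assms(2) unfolding ndrc_def by auto
  have fuzzy: "fuzzy_set u" "fuzzy_set v" and normal: "\<exists>y. u y = 1" "\<exists>y. v y = 1"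
    using assms(4,5) unfolding fuzzy_star_def by auto
  have dist_uv: "infdist x (cut v \<gamma>) \<le> d_infty u v"
    if "\<gamma> \<in> {0<..1}" "x \<in> cut u \<gamma>" for \<gamma> x
    using that by (intro infdist_cut_le_d_infty[OF assms(4,5)]) auto
  have dist_vu: "infdist x (cut u \<gamma>) \<le> d_infty u v"
    if "\<gamma> \<in> {0<..1}" "x \<in> cut v \<gamma>" for \<gamma> x
    using that infdist_cut_le_d_infty[OF assms(5,4)] by (auto simp: d_infty_commute)
  note uv = infdist_cut_comp_le[OF mono assms(3) fuzzy normal(2) dist_uv \<alpha>]
  note vu = infdist_cut_comp_le[OF mono assms(3) fuzzy(2,1) normal(1) dist_vu \<alpha>]
  show "hausdorff_dist (cut (\<rho> \<circ> u) \<alpha>) (cut (\<rho> \<circ> v) \<alpha>) \<le> d_infty u v"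
    using uv vu d_infty_nonneg[OF assms(4,5)] by (intro hausdorff_dist_le) blast+
qed simp

end
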